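(* Consider the infinite-horizon model below and suppose $\epsilon_2\ge0$; fix all parameters other than $\epsilon_1$. (i) There exists $\bar{\epsilon}_{RPE}\in[-\infty,\infty)$ such that for every $\epsilon_1\in\mathbb{R}$, the infinite-horizon model admits an infinite-horizon RPE if and only if $\epsilon_1\ge\bar{\epsilon}_{RPE}$, and the Euler-equation model (same $\beta,\sigma,\lambda,\mu,\psi,p,q,\epsilon_2$) admits an Euler-equation RPE if and only if $\epsilon_1\ge\bar{\epsilon}_{RPE}$; moreover $\bar{\epsilon}_{RPE}=-\infty$ if $q=1$. (ii) Let $\bar{\epsilon}_{REE}\in[-\infty,\infty)$ be the number such that the Euler-equation model admits a rational expectations equilibrium (REE) if and only if $\epsilon_1\ge\bar{\epsilon}_{REE}$. Then $\bar{\epsilon}_{REE}\ge\bar{\epsilon}_{RPE}$ if and only if $p+q\ge1$.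
   Context: Parameters: $0<\beta<1$, $\xi\in(0,1)$, $\lambda:=(1-\xi\beta)(1-\xi)/\xi$, $\sigma,\mu>0$, $\psi>1$, $p,q\in(0,1]$ with $(p,q)\neq(1,1)$. The shock $\epsilon_t$ is a two-state Markov chain on $\{\epsilon_1,\epsilon_2\}$ with $\Pr(\epsilon_{t+1}=\epsilon_1\mid\epsilon_t=\epsilon_1)=p$, $\Pr(\epsilon_{t+1}=\epsilon_2\mid\epsilon_t=\epsilon_2)=q$; $\bar q:=(1-p)/(2-p-q)$. Infinite-horizon model: $x_t=-\sigma i_t+\hat E_t\sum_{T\ge t}\beta^{T-t}\big((1-\beta)x_{T+1}+\sigma\pi_{T+1}-\sigma\beta i_{T+1}+\epsilon_T\big)$, $\pi_t=\lambda x_t+\hat E_t\sum_{T\ge t}(\xi\beta)^{T-t}\big(\xi\beta\lambda x_{T+1}+(1-\xi)\beta\pi_{T+1}\big)$, $i_t=\max\{\psi\pi_t,-\mu\}$. An infinite-horizon RPE is a state-contingent vector $(x_j,\pi_j,i_j)$, $j=1,2$, such that the three equations hold in each state $j$ when $\epsilon_t=\epsilon_j$ is observed and agents set $\hat E_t z_T=E(z):=\bar q z_2+(1-\bar q)z_1$ for all $T>t$ and $z\in\{x,\pi,i,\epsilon\}$. Euler-equation model: $x_t=\hat E_t x_{t+1}-\sigma(i_t-\hat E_t\pi_{t+1})+\epsilon_t$, $\pi_t=\lambda x_t+\beta\hat E_t\pi_{t+1}$, $i_t=\max\{\psi\pi_t,-\mu\}$. For $Y_j=(x_j,\pi_j)$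 and forecasts $Y^e_j=(x^e_j,\pi^e_j)$, $j=1,2$, $(Y_1,Y_2)$ solves the Euler model given the forecasts if $x_j=x^e_j-\sigma(\max\{\psi\pi_j,-\mu\}-\pi^e_j)+\epsilon_j$, $\pi_j=\lambda x_j+\beta\pi^e_j$ for $j=1,2$. An Euler-equation RPE uses $Y^e_1=Y^e_2=\bar qY_2+(1-\bar q)Y_1$; an REE uses $Y^e_1=pY_1+(1-p)Y_2$, $Y^e_2=(1-q)Y_1+qY_2$. *)

theory Defs
  imports Complex_Main "HOL-Library.Extended_Real"
begin

definition lam :: "real \<Rightarrow> real \<Rightarrow> real" where
  "lam \<beta> \<xi> = (1 - \<xi> * \<beta>) * (1 - \<xi>) / \<xi>"

text \<open>qbar := (1-p)/(2-p-q), the stationary probability of state 2\<close>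
definition qbar :: "real \<Rightarrow> real \<Rightarrow> real" where
  "qbar p q = (1 - p) / (2 - p - q)"

definition Eavg :: "real \<Rightarrow> real \<Rightarrow> real \<Rightarrow> real \<Rightarrow> real" where
  "Eavg p q z1 z2 = qbar p q * z2 + (1 - qbar p q) * z1"

text \<open>The three infinite-horizon equations in a state where the shock eps is observed,
  with forecasts Fx, Fpi, Fi, Feps of x, pi, i, eps at all future dates T > t.
  The n-th summand corresponds to T = t + n; at T = t the current shock is known.\<close>
definition ih_eqs ::
  "real \<Rightarrow> real \<Rightarrow> real \<Rightarrow> real \<Rightarrow> real \<Rightarrow> real \<Rightarrow>
   real \<Rightarrow> real \<Rightarrow> real \<Rightarrow> real \<Rightarrow> real \<Rightarrow> real \<Rightarrow> real \<Rightarrow> bool" where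
  "ih_eqs \<beta> \<xi> \<sigma> \<mu> \<psi> Fx F\<pi> Fi Feps eps x \<pi> i \<longleftrightarrow>
     x = - \<sigma> * i + (\<Sum>n. \<beta> ^ n * ((1 - \<beta>) * Fx + \<sigma> * F\<pi> - \<sigma> * \<beta> * Fi
                                      + (if n = 0 then eps else Feps))) \<and>
     \<pi> = lam \<beta> \<xi> * x + (\<Sum>n. (\<xi> * \<beta>) ^ n * (\<xi> * \<beta> * lam \<beta> \<xi> * Fx + (1 - \<xi>) * \<beta> * F\<pi>)) \<and>
     i = max (\<psi> * \<pi>) (- \<mu>)"

definition ih_RPE_exists ::
  "real \<Rightarrow> real \<Rightarrow> real \<Rightarrow> real \<Rightarrow> real \<Rightarrow> real \<Rightarrow> real \<Rightarrow> real \<Rightarrow> real \<Rightarrow> bool" where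
  "ih_RPE_exists \<beta> \<xi> \<sigma> \<mu> \<psi> p q e1 e2 \<longleftrightarrow>
     (\<exists>x1 \<pi>1 i1 x2 \<pi>2 i2.
        ih_eqs \<beta> \<xi> \<sigma> \<mu> \<psi> (Eavg p q x1 x2) (Eavg p q \<pi>1 \<pi>2) (Eavg p q i1 i2) (Eavg p q e1 e2)
               e1 x1 \<pi>1 i1 \<and>
        ih_eqs \<beta> \<xi> \<sigma> \<mu> \<psi> (Eavg p q x1 x2) (Eavg p q \<pi>1 \<pi>2) (Eavg p q i1 i2) (Eavg p q e1 e2)
               e2 x2 \<pi>2 i2)"

definition euler_solves ::
  "real \<Rightarrow> real \<Rightarrow> real \<Rightarrow> real \<Rightarrow> real \<Rightarrow> real \<Rightarrow> real \<Rightarrow>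
   real \<Rightarrow> real \<Rightarrow> real \<Rightarrow> real \<Rightarrow> real \<Rightarrow> real \<Rightarrow> real \<Rightarrow> real \<Rightarrow> bool" where
  "euler_solves \<beta> la \<sigma> \<mu> \<psi> e1 e2 x1 \<pi>1 x2 \<pi>2 xe1 \<pi>e1 xe2 \<pi>e2 \<longleftrightarrow>
     x1 = xe1 - \<sigma> * (max (\<psi> * \<pi>1) (- \<mu>) - \<pi>e1) + e1 \<and> \<pi>1 = la * x1 + \<beta> * \<pi>e1 \<and>
     x2 = xe2 - \<sigma> * (max (\<psi> * \<pi>2) (- \<mu>) - \<pi>e2) + e2 \<and> \<pi>2 = la * x2 + \<beta> * \<pi>e2"

definition euler_RPE_exists ::
  "real \<Rightarrow> real \<Rightarrow> real \<Rightarrow> real \<Rightarrow> real \<Rightarrow> real \<Rightarrow> real \<Rightarrow> real \<Rightarrow> real \<Rightarrow> bool" where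
  "euler_RPE_exists \<beta> la \<sigma> \<mu> \<psi> p q e1 e2 \<longleftrightarrow>
     (\<exists>x1 \<pi>1 x2 \<pi>2.
        euler_solves \<beta> la \<sigma> \<mu> \<psi> e1 e2 x1 \<pi>1 x2 \<pi>2
          (Eavg p q x1 x2) (Eavg p q \<pi>1 \<pi>2) (Eavg p q x1 x2) (Eavg p q \<pi>1 \<pi>2))"

definition euler_REE_exists ::
  "real \<Rightarrow> real \<Rightarrow> real \<Rightarrow> real \<Rightarrow> real \<Rightarrow> real \<Rightarrow> real \<Rightarrow> real \<Rightarrow> real \<Rightarrow> bool" where
  "euler_REE_exists \<beta> la \<sigma> \<mu> \<psi> p q e1 e2 \<longleftrightarrow>
     (\<exists>x1 \<pi>1 x2 \<pi>2.
        euler_solves \<beta> la \<sigma> \<mu> \<psi> e1 e2 x1 \<pi>1 x2 \<pi>2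
          (p * x1 + (1 - p) * x2) (p * \<pi>1 + (1 - p) * \<pi>2)
          ((1 - q) * x1 + q * x2) ((1 - q) * \<pi>1 + q * \<pi>2))"

end

theory Submission
  imports Defs
begin

(* Eliminating the output gaps reduces both RPE notions and the REE to two equations in the state
   inflation rates: the IS equations averaged under the stationary weight w = qbar p q, where every
   forecast cancels, and their difference across the states, whose slope kappa records how
   forecasts respond to the state. RPE forecasts give kappa = 1/lambda; rational forecasts give the
   same formula at the persistence rho = p + q - 1, and it lies in (-sigma, 1/lambda] exactly when
   rho >= 0. Splitting the policy rule at its kink, the averaged equation bounds e1 from below by a
   threshold that is strictly decreasing in kappa, and the intermediate value theorem along the
   inverse of the difference equation shows that the bound suffices. Comparing the thresholds for
   the two slopes gives part (ii). *)

section \<open>The reduced system\<close>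

definition zlb_kink :: "real \<Rightarrow> real \<Rightarrow> real" where
  "zlb_kink \<mu> \<psi> = - \<mu> / \<psi>"

(* The minimum over pi of sigma * (max (psi * pi) (- mu) - pi), attained at the kink. *)
definition real_rate_min :: "real \<Rightarrow> real \<Rightarrow> real \<Rightarrow> real" where
  "real_rate_min \<sigma> \<mu> \<psi> = \<sigma> * (\<mu> / \<psi> - \<mu>)"

lemma policy_rate_split:
  assumes "\<psi> > 0"
  shows "max (\<psi> * z) (- \<mu>) = - \<mu> + \<psi> * max (z - zlb_kink \<mu> \<psi>) 0"
proof -
  have "max (\<psi> * z) (- \<mu>) = \<psi> * max z (zlb_kink \<mu> \<psi>)"
    using assms by (simp add: max_mult_distrib_left zlb_kink_def)
  also have "\<dots> = - \<mu> + \<psi> * max (z - zlb_kink \<mu> \<psi>) 0"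
    using assms by (simp add: max_def zlb_kink_def algebra_simps)
  finally show ?thesis .
qed

lemma real_rate_split:
  assumes "\<psi> > 0"
  shows "\<sigma> * (max (\<psi> * z) (- \<mu>) - z) = real_rate_min \<sigma> \<mu> \<psi>
    + \<sigma> * ((\<psi> - 1) * max (z - zlb_kink \<mu> \<psi>) 0 + max (zlb_kink \<mu> \<psi> - z) 0)"
proof -
  have "z = zlb_kink \<mu> \<psi> + max (z - zlb_kink \<mu> \<psi>) 0 - max (zlb_kink \<mu> \<psi> - z) 0"
    by (simp add: max_def)
  then show ?thesis
    using assms unfolding policy_rate_split[OF assms] real_rate_min_def zlb_kink_def
    by (simp add: field_simps) algebra
qed

lemma real_rate_min_nonpos:
  assumes "\<sigma> \<ge> 0" "\<mu> \<ge> 0" "\<psi> \<ge> 1"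
  shows "real_rate_min \<sigma> \<mu> \<psi> \<le> 0"
proof -
  have "\<mu> / \<psi> \<le> \<mu>"
    using assms by (simp add: divide_le_eq mult_le_cancel_left1)
  then show ?thesis
    using assms by (simp add: real_rate_min_def mult_nonneg_nonpos)
qed

(* The two equations left after eliminating the output gaps: the IS equations averaged with the
   stationary weight w of state 2, and their difference across the two states. *)
definition reduced_system ::
  "real \<Rightarrow> real \<Rightarrow> real \<Rightarrow> real \<Rightarrow> real \<Rightarrow> real \<Rightarrow> real \<Rightarrow> real \<Rightarrow> real \<Rightarrow> bool" where
  "reduced_system \<sigma> \<mu> \<psi> w \<kappa> e1 e2 \<pi>1 \<pi>2 \<longleftrightarrow>
     \<sigma> * (w * (max (\<psi> * \<pi>2) (- \<mu>) - \<pi>2) + (1 - w) * (max (\<psi> * \<pi>1) (- \<mu>) - \<pi>1))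
       = w * e2 + (1 - w) * e1 \<and>
     \<kappa> * (\<pi>1 - \<pi>2) + \<sigma> * (max (\<psi> * \<pi>1) (- \<mu>) - max (\<psi> * \<pi>2) (- \<mu>)) = e1 - e2"

(* The averaged real-rate gap must grow at least at this rate in the spread e2 - e1: the first
   entry is the rate when pi2 sits at the kink, the second when pi1 does. *)
definition gap_slope :: "real \<Rightarrow> real \<Rightarrow> real \<Rightarrow> real \<Rightarrow> real" where
  "gap_slope \<sigma> \<psi> w \<kappa> = min ((1 - w) * \<sigma> / \<kappa>) (w * \<sigma> * (\<psi> - 1) / (\<kappa> + \<sigma> * \<psi>))"

lemma gap_slope_bounds:
  assumes "\<sigma> > 0" "\<psi> > 1" "0 \<le> w" "w \<le> 1" "\<kappa> > 0"
  shows "0 \<le> gap_slope \<sigma> \<psi> w \<kappa>" "gap_slope \<sigma> \<psi> w \<kappa> \<le> w"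
    "gap_slope \<sigma> \<psi> w \<kappa> * \<kappa> \<le> (1 - w) * \<sigma>"
    "gap_slope \<sigma> \<psi> w \<kappa> * (\<kappa> + \<sigma> * \<psi>) \<le> w * \<sigma> * (\<psi> - 1)"
proof -
  have K: "\<kappa> + \<sigma> * \<psi> > 0" "\<sigma> * (\<psi> - 1) \<le> \<kappa> + \<sigma> * \<psi>"
    using assms by (auto simp: algebra_simps add_pos_pos)
  have "w * \<sigma> * (\<psi> - 1) / (\<kappa> + \<sigma> * \<psi>) \<le> w"
    using K assms by (simp add: divide_le_eq mult_left_mono mult.assoc)
  then show "gap_slope \<sigma> \<psi> w \<kappa> \<le> w"
    unfolding gap_slope_def by linarith
  show "0 \<le> gap_slope \<sigma> \<psi> w \<kappa>"
    unfolding gap_slope_def using assms K by simp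
  show "gap_slope \<sigma> \<psi> w \<kappa> * \<kappa> \<le> (1 - w) * \<sigma>"
    unfolding gap_slope_def using assms by (simp add: min_le_iff_disj flip: pos_le_divide_eq)
  show "gap_slope \<sigma> \<psi> w \<kappa> * (\<kappa> + \<sigma> * \<psi>) \<le> w * \<sigma> * (\<psi> - 1)"
    unfolding gap_slope_def using K by (simp add: min_le_iff_disj flip: pos_le_divide_eq)
qed

lemma rate_spread_bound_ordered:
  fixes \<sigma> \<mu> \<psi> w \<kappa> \<kappa>0 \<pi>1 \<pi>2 :: real
  assumes \<sigma>: "\<sigma> > 0" and \<psi>: "\<psi> > 1" and w: "0 \<le> w" "w \<le> 1"
    and \<kappa>: "\<kappa> \<le> \<kappa>0" "\<kappa>0 > 0" and \<pi>: "\<pi>1 \<le> \<pi>2"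
  shows "gap_slope \<sigma> \<psi> w \<kappa>0 * ((\<kappa> * \<pi>2 + \<sigma> * max (\<psi> * \<pi>2) (- \<mu>))
      - (\<kappa> * \<pi>1 + \<sigma> * max (\<psi> * \<pi>1) (- \<mu>)))
    \<le> \<sigma> * w * (\<psi> - 1) * max (\<pi>2 - zlb_kink \<mu> \<psi>) 0
      + \<sigma> * (1 - w) * max (zlb_kink \<mu> \<psi> - \<pi>1) 0"
proof -
  define k m where "k = zlb_kink \<mu> \<psi>" and "m = gap_slope \<sigma> \<psi> w \<kappa>0"
  define a b where "a = max (\<pi>2 - k) 0 - max (\<pi>1 - k) 0"
    and "b = max (k - \<pi>1) 0 - max (k - \<pi>2) 0"
  have \<psi>0: "\<psi> > 0"
    using \<psi> by simp
  have m: "0 \<le> m" "m * \<kappa>0 \<le> (1 - w) * \<sigma>" "m * (\<kappa>0 + \<sigma> * \<psi>) \<le> w * \<sigma> * (\<psi> - 1)"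
    using gap_slope_bounds[OF \<sigma> \<psi> w \<kappa>(2)] unfolding m_def by auto
  have ab: "0 \<le> a" "0 \<le> b"
    using \<pi> by (auto simp: a_def b_def)
  have "(\<kappa> * \<pi>2 + \<sigma> * max (\<psi> * \<pi>2) (- \<mu>)) - (\<kappa> * \<pi>1 + \<sigma> * max (\<psi> * \<pi>1) (- \<mu>))
      = (\<kappa> + \<sigma> * \<psi>) * a + \<kappa> * b"
    unfolding policy_rate_split[OF \<psi>0] k_def[symmetric] a_def b_def
    by (simp add: max_def algebra_simps)
  also have "\<dots> \<le> (\<kappa>0 + \<sigma> * \<psi>) * a + \<kappa>0 * b"
    using ab \<kappa> \<psi>0 by (intro add_mono mult_right_mono) auto
  finally have "m * ((\<kappa> * \<pi>2 + \<sigma> * max (\<psi> * \<pi>2) (- \<mu>))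
      - (\<kappa> * \<pi>1 + \<sigma> * max (\<psi> * \<pi>1) (- \<mu>))) \<le> m * ((\<kappa>0 + \<sigma> * \<psi>) * a + \<kappa>0 * b)"
    using m by (intro mult_left_mono) auto
  also have "\<dots> = (m * (\<kappa>0 + \<sigma> * \<psi>)) * a + (m * \<kappa>0) * b"
    by (simp add: algebra_simps)
  also have "\<dots> \<le> (w * \<sigma> * (\<psi> - 1)) * a + ((1 - w) * \<sigma>) * b"
    using m ab by (intro add_mono mult_right_mono) auto
  also have "\<dots> \<le> \<sigma> * w * (\<psi> - 1) * max (\<pi>2 - k) 0 + \<sigma> * (1 - w) * max (k - \<pi>1) 0"
  proof -
    have "0 \<le> w * \<sigma> * (\<psi> - 1) * max (\<pi>1 - k) 0" "0 \<le> (1 - w) * \<sigma> * max (k - \<pi>2) 0"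
      using \<sigma> \<psi> w by simp_all
    then show ?thesis
      unfolding a_def b_def by (simp add: algebra_simps)
  qed
  finally show ?thesis
    unfolding m_def k_def .
qed

lemma rate_spread_bound_reversed:
  fixes \<sigma> \<mu> \<psi> \<kappa> \<pi>1 \<pi>2 :: real
  assumes \<sigma>: "\<sigma> > 0" and \<psi>: "\<psi> > 1" and \<kappa>: "- \<sigma> < \<kappa>" and \<pi>: "\<pi>2 \<le> \<pi>1"
  shows "(\<kappa> * \<pi>2 + \<sigma> * max (\<psi> * \<pi>2) (- \<mu>)) - (\<kappa> * \<pi>1 + \<sigma> * max (\<psi> * \<pi>1) (- \<mu>))
    \<le> \<sigma> * max (zlb_kink \<mu> \<psi> - \<pi>2) 0"
proof -
  define k where "k = zlb_kink \<mu> \<psi>"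
  have \<psi>0: "\<psi> > 0"
    using \<psi> by simp
  have "(\<kappa> * \<pi>2 + \<sigma> * max (\<psi> * \<pi>2) (- \<mu>)) - (\<kappa> * \<pi>1 + \<sigma> * max (\<psi> * \<pi>1) (- \<mu>))
      = (\<kappa> + \<sigma>) * (\<pi>2 - \<pi>1) + \<sigma> * (\<psi> - 1) * (max (\<pi>2 - k) 0 - max (\<pi>1 - k) 0)
        + \<sigma> * max (k - \<pi>2) 0 - \<sigma> * max (k - \<pi>1) 0"
    unfolding policy_rate_split[OF \<psi>0] k_def[symmetric] by (simp add: max_def algebra_simps)
  moreover have "(\<kappa> + \<sigma>) * (\<pi>2 - \<pi>1) \<le> 0"
    using \<kappa> \<pi> by (simp add: mult_nonneg_nonpos)
  moreover have "\<sigma> * (\<psi> - 1) * (max (\<pi>2 - k) 0 - max (\<pi>1 - k) 0) \<le> 0"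
    using \<sigma> \<psi> \<pi> by (intro mult_nonneg_nonpos) auto
  moreover have "0 \<le> \<sigma> * max (k - \<pi>1) 0"
    using \<sigma> by simp
  ultimately show ?thesis
    unfolding k_def by linarith
qed

lemma real_rate_gap_spread_bound:
  fixes \<sigma> \<mu> \<psi> w \<kappa> \<kappa>0 \<pi>1 \<pi>2 :: real
  assumes \<sigma>: "\<sigma> > 0" and \<psi>: "\<psi> > 1" and w: "0 \<le> w" "w \<le> 1"
    and \<kappa>: "- \<sigma> < \<kappa>" "\<kappa> \<le> \<kappa>0" "\<kappa>0 > 0"
  shows "gap_slope \<sigma> \<psi> w \<kappa>0 * ((\<kappa> * \<pi>2 + \<sigma> * max (\<psi> * \<pi>2) (- \<mu>))
      - (\<kappa> * \<pi>1 + \<sigma> * max (\<psi> * \<pi>1) (- \<mu>)))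
    \<le> w * (\<sigma> * (max (\<psi> * \<pi>2) (- \<mu>) - \<pi>2) - real_rate_min \<sigma> \<mu> \<psi>)
      + (1 - w) * (\<sigma> * (max (\<psi> * \<pi>1) (- \<mu>) - \<pi>1) - real_rate_min \<sigma> \<mu> \<psi>)"
    (is "?m * ?t \<le> ?S")
proof -
  define k where "k = zlb_kink \<mu> \<psi>"
  have \<psi>0: "\<psi> > 0"
    using \<psi> by simp
  have S: "?S = \<sigma> * w * (\<psi> - 1) * max (\<pi>2 - k) 0 + \<sigma> * w * max (k - \<pi>2) 0
      + \<sigma> * (1 - w) * (\<psi> - 1) * max (\<pi>1 - k) 0 + \<sigma> * (1 - w) * max (k - \<pi>1) 0"
    unfolding real_rate_split[OF \<psi>0] k_def by (simp add: algebra_simps)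
  have terms: "0 \<le> \<sigma> * w * (\<psi> - 1) * max (z - k) 0" "0 \<le> \<sigma> * w * max (k - z) 0"
    "0 \<le> \<sigma> * (1 - w) * (\<psi> - 1) * max (z - k) 0" "0 \<le> \<sigma> * (1 - w) * max (k - z) 0" for z
    using \<sigma> \<psi> w by simp_all
  have m: "0 \<le> ?m" "?m \<le> w"
    using gap_slope_bounds[OF \<sigma> \<psi> w \<kappa>(3)] by auto
  show ?thesis
  proof (cases "\<pi>1 \<le> \<pi>2")
    case True
    then show ?thesis
      using rate_spread_bound_ordered[OF \<sigma> \<psi> w \<kappa>(2,3) True, where \<mu> = \<mu>]
        S terms[of \<pi>1] terms[of \<pi>2]
      unfolding k_def by linarith
  next
    case False
    then have t: "?t \<le> \<sigma> * max (k - \<pi>2) 0"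
      using rate_spread_bound_reversed[OF \<sigma> \<psi> \<kappa>(1), where \<mu> = \<mu>] unfolding k_def by simp
    have "?m * ?t \<le> w * (\<sigma> * max (k - \<pi>2) 0)"
    proof (cases "?t \<le> 0")
      case True
      then have "?m * ?t \<le> 0"
        using m by (simp add: mult_nonneg_nonpos)
      also have "0 \<le> w * (\<sigma> * max (k - \<pi>2) 0)"
        using \<sigma> w by simp
      finally show ?thesis .
    next
      case False
      then have "?m * ?t \<le> w * ?t"
        using m by (intro mult_right_mono) auto
      also have "\<dots> \<le> w * (\<sigma> * max (k - \<pi>2) 0)"
        using t w by (intro mult_left_mono) auto
      finally show ?thesis .
    qed
    then show ?thesis
      using S terms[of \<pi>1] terms[of \<pi>2] by (simp add: algebra_simps)
  qed
qed

lemma reduced_system_necessary: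
  assumes "\<sigma> > 0" "\<psi> > 1" "0 \<le> w" "w \<le> 1" "- \<sigma> < \<kappa>" "\<kappa> \<le> \<kappa>0" "\<kappa>0 > 0"
    and "reduced_system \<sigma> \<mu> \<psi> w \<kappa> e1 e2 \<pi>1 \<pi>2"
  shows "(e2 - e1) * (gap_slope \<sigma> \<psi> w \<kappa>0 + 1 - w) \<le> e2 - real_rate_min \<sigma> \<mu> \<psi>"
proof -
  have spread: "e2 - e1 = (\<kappa> * \<pi>2 + \<sigma> * max (\<psi> * \<pi>2) (- \<mu>))
      - (\<kappa> * \<pi>1 + \<sigma> * max (\<psi> * \<pi>1) (- \<mu>))"
    and gaps: "w * e2 + (1 - w) * e1 - real_rate_min \<sigma> \<mu> \<psi>
      = w * (\<sigma> * (max (\<psi> * \<pi>2) (- \<mu>) - \<pi>2) - real_rate_min \<sigma> \<mu> \<psi>)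
        + (1 - w) * (\<sigma> * (max (\<psi> * \<pi>1) (- \<mu>) - \<pi>1) - real_rate_min \<sigma> \<mu> \<psi>)"
    using assms(8) unfolding reduced_system_def by (simp_all add: algebra_simps)
  have "gap_slope \<sigma> \<psi> w \<kappa>0 * (e2 - e1) \<le> w * e2 + (1 - w) * e1 - real_rate_min \<sigma> \<mu> \<psi>"
    unfolding spread gaps by (rule real_rate_gap_spread_bound[OF assms(1-7)])
  then show ?thesis
    by (simp add: algebra_simps)
qed

(* The inverse of z \<mapsto> kappa * z + sigma * max (psi * z) (- mu), recentred at the kink. *)
lemma kink_path:
  fixes \<sigma> \<mu> \<psi> \<kappa> v :: real
  assumes \<sigma>: "\<sigma> > 0" and \<psi>: "\<psi> > 1" and \<kappa>: "\<kappa> > 0"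
  defines "z \<equiv> zlb_kink \<mu> \<psi> + min (v / (\<kappa> + \<sigma> * \<psi>)) (v / \<kappa>)"
  shows "\<kappa> * z + \<sigma> * max (\<psi> * z) (- \<mu>) = \<kappa> * zlb_kink \<mu> \<psi> - \<sigma> * \<mu> + v"
    and "\<sigma> * (max (\<psi> * z) (- \<mu>) - z)
      = real_rate_min \<sigma> \<mu> \<psi> + max (\<sigma> * (\<psi> - 1) / (\<kappa> + \<sigma> * \<psi>) * v) (- (\<sigma> / \<kappa>) * v)"
proof -
  define k K where "k = zlb_kink \<mu> \<psi>" and "K = \<kappa> + \<sigma> * \<psi>"
  have K: "0 < K" "\<kappa> < K"
    using \<sigma> \<psi> \<kappa> by (simp_all add: K_def add_pos_pos)
  have \<psi>0: "\<psi> > 0"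
    using \<psi> by simp
  have "\<kappa> * z + \<sigma> * max (\<psi> * z) (- \<mu>) = \<kappa> * k - \<sigma> * \<mu> + v
    \<and> \<sigma> * (max (\<psi> * z) (- \<mu>) - z)
      = real_rate_min \<sigma> \<mu> \<psi> + max (\<sigma> * (\<psi> - 1) / K * v) (- (\<sigma> / \<kappa>) * v)"
  proof (cases "0 \<le> v")
    case True
    have "v / K \<le> v / \<kappa>"
      using True K \<kappa> by (intro divide_left_mono) auto
    then have z: "z = k + v / K"
      by (simp add: z_def k_def K_def[symmetric])
    have parts: "max (z - k) 0 = v / K" "max (k - z) 0 = 0"
      using True K by (simp_all add: z)
    have "- (\<sigma> / \<kappa>) * v \<le> 0" "0 \<le> \<sigma> * (\<psi> - 1) / K * v"
      using True K \<sigma> \<psi> \<kappa> by (simp_all add: mult_nonpos_nonneg)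
    then have slope: "max (\<sigma> * (\<psi> - 1) / K * v) (- (\<sigma> / \<kappa>) * v) = \<sigma> * (\<psi> - 1) * (v / K)"
      by (simp add: max_def)
    have "(\<kappa> + \<sigma> * \<psi>) * (v / K) = v"
      using K by (simp add: K_def)
    then show ?thesis
      unfolding real_rate_split[OF \<psi>0, where z = z] unfolding policy_rate_split[OF \<psi>0, where z = z]
        k_def[symmetric] parts slope unfolding z by (simp add: algebra_simps diff_divide_distrib)
  next
    case False
    have "v / \<kappa> \<le> v / K"
      using False K \<kappa> by (intro divide_left_mono_neg) auto
    then have z: "z = k + v / \<kappa>"
      by (simp add: z_def k_def K_def[symmetric])
    have parts: "max (z - k) 0 = 0" "max (k - z) 0 = - (v / \<kappa>)"
      using False \<kappa> by (simp_all add: z divide_nonpos_pos)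
    have "\<sigma> * (\<psi> - 1) / K * v \<le> 0" "0 \<le> (\<sigma> / \<kappa>) * (- v)"
      using False K \<sigma> \<psi> \<kappa> by (intro mult_nonneg_nonpos mult_nonneg_nonneg; simp)+
    then have slope: "max (\<sigma> * (\<psi> - 1) / K * v) (- (\<sigma> / \<kappa>) * v) = \<sigma> * - (v / \<kappa>)"
      by (simp add: max_def)
    have "\<kappa> * (v / \<kappa>) = v"
      using \<kappa> by simp
    then show ?thesis
      unfolding real_rate_split[OF \<psi>0, where z = z] unfolding policy_rate_split[OF \<psi>0, where z = z]
        k_def[symmetric] parts slope unfolding z by (simp add: algebra_simps)
  qed
  then show "\<kappa> * z + \<sigma> * max (\<psi> * z) (- \<mu>) = \<kappa> * zlb_kink \<mu> \<psi> - \<sigma> * \<mu> + v"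
    "\<sigma> * (max (\<psi> * z) (- \<mu>) - z)
      = real_rate_min \<sigma> \<mu> \<psi> + max (\<sigma> * (\<psi> - 1) / (\<kappa> + \<sigma> * \<psi>) * v) (- (\<sigma> / \<kappa>) * v)"
    by (simp_all add: k_def K_def)
qed

lemma reduced_system_from_kink_path:
  fixes \<sigma> \<mu> \<psi> w \<kappa> e1 e2 s :: real
  assumes \<sigma>: "\<sigma> > 0" and \<psi>: "\<psi> > 1" and \<kappa>: "\<kappa> > 0"
  defines "a \<equiv> \<sigma> * (\<psi> - 1) / (\<kappa> + \<sigma> * \<psi>)" and "b \<equiv> \<sigma> / \<kappa>"
  assumes s: "w * max (a * (s + e2)) (- b * (s + e2))
      + (1 - w) * max (a * (s + e1)) (- b * (s + e1)) = w * e2 + (1 - w) * e1 - real_rate_min \<sigma> \<mu> \<psi>"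
  shows "\<exists>\<pi>1 \<pi>2. reduced_system \<sigma> \<mu> \<psi> w \<kappa> e1 e2 \<pi>1 \<pi>2"
proof -
  define \<pi>1 \<pi>2
    where "\<pi>1 = zlb_kink \<mu> \<psi> + min ((s + e1) / (\<kappa> + \<sigma> * \<psi>)) ((s + e1) / \<kappa>)"
      and "\<pi>2 = zlb_kink \<mu> \<psi> + min ((s + e2) / (\<kappa> + \<sigma> * \<psi>)) ((s + e2) / \<kappa>)"
  note path1 = kink_path[OF \<sigma> \<psi> \<kappa>, of \<mu> "s + e1", folded \<pi>1_def a_def b_def]
    and path2 = kink_path[OF \<sigma> \<psi> \<kappa>, of \<mu> "s + e2", folded \<pi>2_def a_def b_def]
  have "\<sigma> * (w * (max (\<psi> * \<pi>2) (- \<mu>) - \<pi>2) + (1 - w) * (max (\<psi> * \<pi>1) (- \<mu>) - \<pi>1))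
      = w * (\<sigma> * (max (\<psi> * \<pi>2) (- \<mu>) - \<pi>2)) + (1 - w) * (\<sigma> * (max (\<psi> * \<pi>1) (- \<mu>) - \<pi>1))"
    by (simp add: algebra_simps)
  also have "\<dots> = w * e2 + (1 - w) * e1"
    unfolding path1(2) path2(2) using s by (simp add: algebra_simps)
  finally have "reduced_system \<sigma> \<mu> \<psi> w \<kappa> e1 e2 \<pi>1 \<pi>2"
    unfolding reduced_system_def using path1(1) path2(1) by (simp add: algebra_simps)
  then show ?thesis
    by blast
qed

(* The bound in the hypothesis is the smaller of the values of the average at s = - e2 and
   s = - e1, and the average grows at least like a * s, so the intermediate value theorem applies. *)
lemma kinked_average_attains:
  fixes a b w e1 e2 y :: real
  assumes ab: "0 < a" "0 < b" and w: "0 \<le> w" "w \<le> 1"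
    and y: "min ((1 - w) * max (a * (e1 - e2)) (- b * (e1 - e2)))
      (w * max (a * (e2 - e1)) (- b * (e2 - e1))) \<le> y"
  shows "\<exists>s. w * max (a * (s + e2)) (- b * (s + e2)) + (1 - w) * max (a * (s + e1)) (- b * (s + e1))
    = y"
proof -
  define f where
    "f s = w * max (a * (s + e2)) (- b * (s + e2)) + (1 - w) * max (a * (s + e1)) (- b * (s + e1))"
    for s
  obtain s0 where s0: "f s0 \<le> y"
  proof (cases "f (- e2) \<le> f (- e1)")
    case True
    then show thesis
      using that[of "- e2"] y by (simp add: f_def)
  next
    case False
    then show thesis
      using that[of "- e1"] y by (simp add: f_def)
  qed
  define s1 where "s1 = max s0 (y / a - (w * e2 + (1 - w) * e1))"
  have "y = a * ((y / a - (w * e2 + (1 - w) * e1)) + (w * e2 + (1 - w) * e1))"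
    using ab by simp
  also have "\<dots> \<le> a * (s1 + (w * e2 + (1 - w) * e1))"
    using ab by (intro mult_left_mono) (auto simp: s1_def)
  also have "\<dots> = w * (a * (s1 + e2)) + (1 - w) * (a * (s1 + e1))"
    by (simp add: algebra_simps)
  also have "\<dots> \<le> f s1"
    unfolding f_def using w by (intro add_mono mult_left_mono) auto
  finally have "y \<le> f s1" .
  moreover have "continuous_on {s0..s1} f"
    unfolding f_def by (intro continuous_intros)
  ultimately show ?thesis
    using IVT'[of f s0 y s1] s0 unfolding f_def s1_def by auto
qed

lemma reduced_system_sufficient:
  assumes \<sigma>: "\<sigma> > 0" and \<mu>: "\<mu> \<ge> 0" and \<psi>: "\<psi> > 1" and w: "0 \<le> w" "w \<le> 1"
    and \<kappa>: "\<kappa> > 0" and e2: "e2 \<ge> 0"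
    and cond: "(e2 - e1) * (gap_slope \<sigma> \<psi> w \<kappa> + 1 - w) \<le> e2 - real_rate_min \<sigma> \<mu> \<psi>"
  shows "\<exists>\<pi>1 \<pi>2. reduced_system \<sigma> \<mu> \<psi> w \<kappa> e1 e2 \<pi>1 \<pi>2"
proof -
  define a b G where "a = \<sigma> * (\<psi> - 1) / (\<kappa> + \<sigma> * \<psi>)" and "b = \<sigma> / \<kappa>"
    and "G = real_rate_min \<sigma> \<mu> \<psi>"
  have ab: "0 < a" "a \<le> 1" "0 < b"
    using \<sigma> \<psi> \<kappa> by (simp_all add: a_def b_def add_pos_pos divide_le_eq algebra_simps)
  have "min ((1 - w) * max (a * (e1 - e2)) (- b * (e1 - e2)))
      (w * max (a * (e2 - e1)) (- b * (e2 - e1))) \<le> w * e2 + (1 - w) * e1 - G"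
  proof (cases "e2 \<le> e1")
    case True
    have "0 \<le> a * (e1 - e2)" "0 \<le> b * (e1 - e2)"
      using True ab by simp_all
    then have "(1 - w) * max (a * (e1 - e2)) (- b * (e1 - e2)) = (1 - w) * (a * (e1 - e2))"
      by (simp add: max_absorb1)
    also have "\<dots> \<le> (1 - w) * (e1 - e2)"
      using True ab w by (intro mult_left_mono mult_left_le_one_le) auto
    also have "\<dots> \<le> w * e2 + (1 - w) * e1 - G"
      using real_rate_min_nonpos[of \<sigma> \<mu> \<psi>] \<sigma> \<mu> \<psi> e2 by (simp add: G_def algebra_simps)
    finally show ?thesis
      by (rule min.coboundedI1)
  next
    case False
    have "0 \<le> a * (e2 - e1)" "0 \<le> b * (e2 - e1)"
      using False ab by simp_all
    then have "a * (e1 - e2) \<le> - b * (e1 - e2)" "- b * (e2 - e1) \<le> a * (e2 - e1)"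
      by (simp_all add: algebra_simps)
    then have "max (a * (e1 - e2)) (- b * (e1 - e2)) = b * (e2 - e1)"
      "max (a * (e2 - e1)) (- b * (e2 - e1)) = a * (e2 - e1)"
      by (simp_all add: max_absorb1 max_absorb2 algebra_simps)
    moreover have "gap_slope \<sigma> \<psi> w \<kappa> = min ((1 - w) * b) (w * a)"
      by (simp add: gap_slope_def a_def b_def)
    ultimately have "min ((1 - w) * max (a * (e1 - e2)) (- b * (e1 - e2)))
        (w * max (a * (e2 - e1)) (- b * (e2 - e1))) = gap_slope \<sigma> \<psi> w \<kappa> * (e2 - e1)"
      using False by (simp add: min_mult_distrib_right mult.assoc)
    also have "\<dots> \<le> w * e2 + (1 - w) * e1 - G"
      using cond by (simp add: G_def algebra_simps)
    finally show ?thesis .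
  qed
  then obtain s where "w * max (a * (s + e2)) (- b * (s + e2))
      + (1 - w) * max (a * (s + e1)) (- b * (s + e1)) = w * e2 + (1 - w) * e1 - G"
    using kinked_average_attains[OF ab(1,3) w] by blast
  then show ?thesis
    using reduced_system_from_kink_path[OF \<sigma> \<psi> \<kappa>] unfolding a_def b_def G_def by blast
qed

definition rpe_threshold :: "real \<Rightarrow> real \<Rightarrow> real \<Rightarrow> real \<Rightarrow> real \<Rightarrow> real \<Rightarrow> real" where
  "rpe_threshold \<sigma> \<mu> \<psi> w \<kappa> e2 =
     e2 - (e2 - real_rate_min \<sigma> \<mu> \<psi>) / (gap_slope \<sigma> \<psi> w \<kappa> + 1 - w)"

lemma solvability_condition_iff_threshold:
  assumes "\<sigma> > 0" "\<psi> > 1" "0 \<le> w" "w < 1" "\<kappa> > 0"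
  shows "(e2 - e1) * (gap_slope \<sigma> \<psi> w \<kappa> + 1 - w) \<le> e2 - real_rate_min \<sigma> \<mu> \<psi>
    \<longleftrightarrow> rpe_threshold \<sigma> \<mu> \<psi> w \<kappa> e2 \<le> e1"
proof -
  have D: "gap_slope \<sigma> \<psi> w \<kappa> + 1 - w > 0"
    using gap_slope_bounds(1)[of \<sigma> \<psi> w \<kappa>] assms by linarith
  have "rpe_threshold \<sigma> \<mu> \<psi> w \<kappa> e2 \<le> e1
      \<longleftrightarrow> e2 - e1 \<le> (e2 - real_rate_min \<sigma> \<mu> \<psi>) / (gap_slope \<sigma> \<psi> w \<kappa> + 1 - w)"
    unfolding rpe_threshold_def by linarith
  also have "\<dots> \<longleftrightarrow> (e2 - e1) * (gap_slope \<sigma> \<psi> w \<kappa> + 1 - w) \<le> e2 - real_rate_min \<sigma> \<mu> \<psi>"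
    using D by (rule pos_le_divide_eq)
  finally show ?thesis
    by simp
qed

lemma reduced_system_solvable_iff:
  assumes "\<sigma> > 0" "\<mu> \<ge> 0" "\<psi> > 1" "0 \<le> w" "w < 1" "\<kappa> > 0" "e2 \<ge> 0"
  shows "(\<exists>\<pi>1 \<pi>2. reduced_system \<sigma> \<mu> \<psi> w \<kappa> e1 e2 \<pi>1 \<pi>2)
    \<longleftrightarrow> rpe_threshold \<sigma> \<mu> \<psi> w \<kappa> e2 \<le> e1"
  using reduced_system_necessary[of \<sigma> \<psi> w \<kappa> \<kappa>] reduced_system_sufficient[of \<sigma> \<mu> \<psi> w \<kappa> e2 e1]
    solvability_condition_iff_threshold[of \<sigma> \<psi> w \<kappa> e2 e1 \<mu>] assms
  by auto

lemma rpe_threshold_strict_antimono: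
  assumes \<sigma>: "\<sigma> > 0" and \<mu>: "\<mu> > 0" and \<psi>: "\<psi> > 1" and w: "0 < w" "w < 1"
    and \<kappa>: "0 < \<kappa>" "\<kappa> < \<kappa>'" and e2: "e2 \<ge> 0"
  shows "rpe_threshold \<sigma> \<mu> \<psi> w \<kappa>' e2 < rpe_threshold \<sigma> \<mu> \<psi> w \<kappa> e2"
proof -
  have "(1 - w) * \<sigma> / \<kappa>' < (1 - w) * \<sigma> / \<kappa>"
    using w \<sigma> \<kappa> by (intro divide_strict_left_mono) auto
  moreover have "w * \<sigma> * (\<psi> - 1) / (\<kappa>' + \<sigma> * \<psi>) < w * \<sigma> * (\<psi> - 1) / (\<kappa> + \<sigma> * \<psi>)"
    using w \<sigma> \<psi> \<kappa> by (intro divide_strict_left_mono) (auto simp: add_pos_pos)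
  ultimately have "gap_slope \<sigma> \<psi> w \<kappa>' < gap_slope \<sigma> \<psi> w \<kappa>"
    unfolding gap_slope_def by (auto simp: min_def)
  moreover have "0 < gap_slope \<sigma> \<psi> w \<kappa>' + 1 - w"
    using gap_slope_bounds(1)[of \<sigma> \<psi> w \<kappa>'] \<sigma> \<psi> w \<kappa> by linarith
  moreover have "\<mu> / \<psi> - \<mu> < 0"
    using \<mu> \<psi> by (simp add: divide_less_eq)
  then have "0 < e2 - real_rate_min \<sigma> \<mu> \<psi>"
    using mult_pos_neg[OF \<sigma>] e2 unfolding real_rate_min_def by fastforce
  ultimately show ?thesis
    unfolding rpe_threshold_def by (simp add: divide_strict_left_mono)
qed

section \<open>Reduction of the Euler-equation model\<close>

definition euler_slope :: "real \<Rightarrow> real \<Rightarrow> real \<Rightarrow> real \<Rightarrow> real" where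
  "euler_slope \<beta> la \<sigma> \<rho> = ((1 - \<rho>) * (1 - \<beta> * \<rho>) - la * \<sigma> * \<rho>) / la"

(* A two-state chain leaving state 1 with probability a and state 2 with probability b has
   stationary weight w of state 2 and second eigenvalue rho, where a = w (1 - rho) and
   b = (1 - w) (1 - rho). RPE forecasts are those of the chain with rho = 0 and the same w. *)
lemma euler_solves_markov_iff:
  fixes \<beta> la \<sigma> \<mu> \<psi> w \<rho> a b e1 e2 \<pi>1 \<pi>2 :: real
  assumes la: "la \<noteq> 0" and a: "a = w * (1 - \<rho>)" and b: "b = (1 - w) * (1 - \<rho>)"
  shows "(\<exists>x1 x2. euler_solves \<beta> la \<sigma> \<mu> \<psi> e1 e2 x1 \<pi>1 x2 \<pi>2
            ((1 - a) * x1 + a * x2) ((1 - a) * \<pi>1 + a * \<pi>2)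
            (b * x1 + (1 - b) * x2) (b * \<pi>1 + (1 - b) * \<pi>2))
    \<longleftrightarrow> reduced_system \<sigma> \<mu> \<psi> w (euler_slope \<beta> la \<sigma> \<rho>) e1 e2 \<pi>1 \<pi>2"
    (is "(\<exists>x1 x2. ?eu x1 x2) \<longleftrightarrow> _")
proof -
  define i1 i2 where "i1 = max (\<psi> * \<pi>1) (- \<mu>)" and "i2 = max (\<psi> * \<pi>2) (- \<mu>)"
  define \<pi>e1 \<pi>e2 where "\<pi>e1 = (1 - a) * \<pi>1 + a * \<pi>2" and "\<pi>e2 = b * \<pi>1 + (1 - b) * \<pi>2"
  define x1 x2 where "x1 = (\<pi>1 - \<beta> * \<pi>e1) / la" and "x2 = (\<pi>2 - \<beta> * \<pi>e2) / la"
  define r1 r2 where "r1 = x1 - ((1 - a) * x1 + a * x2 - \<sigma> * (i1 - \<pi>e1) + e1)"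
    and "r2 = x2 - (b * x1 + (1 - b) * x2 - \<sigma> * (i2 - \<pi>e2) + e2)"
  have x_unique: "\<pi>1 = la * y1 + \<beta> * \<pi>e1 \<and> \<pi>2 = la * y2 + \<beta> * \<pi>e2 \<longleftrightarrow> y1 = x1 \<and> y2 = x2"
    for y1 y2
    using la by (auto simp: x1_def x2_def field_simps)
  have mean: "w * r2 + (1 - w) * r1
      = \<sigma> * (w * (i2 - \<pi>2) + (1 - w) * (i1 - \<pi>1)) - (w * e2 + (1 - w) * e1)"
    unfolding r1_def r2_def \<pi>e1_def \<pi>e2_def a b by (simp add: algebra_simps)
  have diff: "r1 - r2 = euler_slope \<beta> la \<sigma> \<rho> * (\<pi>1 - \<pi>2) + \<sigma> * (i1 - i2) - (e1 - e2)"
    using la unfolding r1_def r2_def x1_def x2_def \<pi>e1_def \<pi>e2_def a b euler_slope_def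
    by (simp add: field_simps)
  have "?eu y1 y2 \<Longrightarrow> y1 = x1 \<and> y2 = x2" for y1 y2
    using x_unique unfolding euler_solves_def \<pi>e1_def[symmetric] \<pi>e2_def[symmetric] by blast
  then have "(\<exists>y1 y2. ?eu y1 y2) \<longleftrightarrow> ?eu x1 x2"
    by blast
  also have "\<dots> \<longleftrightarrow> r1 = 0 \<and> r2 = 0"
    using x_unique[of x1 x2]
    unfolding euler_solves_def r1_def r2_def i1_def[symmetric] i2_def[symmetric]
      \<pi>e1_def[symmetric] \<pi>e2_def[symmetric]
    by auto
  also have "\<dots> \<longleftrightarrow> w * r2 + (1 - w) * r1 = 0 \<and> r1 - r2 = 0"
    by (auto simp: algebra_simps)
  also have "\<dots> \<longleftrightarrow> reduced_system \<sigma> \<mu> \<psi> w (euler_slope \<beta> la \<sigma> \<rho>) e1 e2 \<pi>1 \<pi>2"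
    unfolding mean diff reduced_system_def i1_def i2_def by (simp add: algebra_simps)
  finally show ?thesis .
qed

lemma euler_RPE_iff_reduced:
  assumes "la \<noteq> 0"
  shows "euler_RPE_exists \<beta> la \<sigma> \<mu> \<psi> p q e1 e2
    \<longleftrightarrow> (\<exists>\<pi>1 \<pi>2. reduced_system \<sigma> \<mu> \<psi> (qbar p q) (1 / la) e1 e2 \<pi>1 \<pi>2)"
proof -
  define w where "w = qbar p q"
  have avg: "Eavg p q z1 z2 = (1 - w) * z1 + w * z2" for z1 z2
    by (simp add: Eavg_def w_def algebra_simps)
  have "(\<exists>x1 x2. euler_solves \<beta> la \<sigma> \<mu> \<psi> e1 e2 x1 \<pi>1 x2 \<pi>2
      (Eavg p q x1 x2) (Eavg p q \<pi>1 \<pi>2) (Eavg p q x1 x2) (Eavg p q \<pi>1 \<pi>2))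
    \<longleftrightarrow> reduced_system \<sigma> \<mu> \<psi> w (1 / la) e1 e2 \<pi>1 \<pi>2" for \<pi>1 \<pi>2
    using euler_solves_markov_iff[OF assms, where w = w and \<rho> = 0 and a = w and b = "1 - w"]
    unfolding avg by (simp add: euler_slope_def)
  then show ?thesis
    unfolding euler_RPE_exists_def w_def by blast
qed

lemma euler_REE_iff_reduced:
  assumes "la \<noteq> 0" and "p + q \<noteq> 2"
  shows "euler_REE_exists \<beta> la \<sigma> \<mu> \<psi> p q e1 e2
    \<longleftrightarrow> (\<exists>\<pi>1 \<pi>2. reduced_system \<sigma> \<mu> \<psi> (qbar p q) (euler_slope \<beta> la \<sigma> (p + q - 1)) e1 e2 \<pi>1 \<pi>2)"
proof -
  have "1 - p = qbar p q * (1 - (p + q - 1))" "1 - q = (1 - qbar p q) * (1 - (p + q - 1))"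
    using assms(2) by (simp_all add: qbar_def field_simps)
  from euler_solves_markov_iff[OF assms(1) this]
  show ?thesis
    unfolding euler_REE_exists_def by simp blast
qed

lemma euler_slope_persistent:
  assumes \<beta>: "0 \<le> \<beta>" "\<beta> \<le> 1" and la: "la > 0" and \<sigma>: "\<sigma> > 0" and \<rho>: "0 \<le> \<rho>" "\<rho> < 1"
  shows "- \<sigma> < euler_slope \<beta> la \<sigma> \<rho>" "euler_slope \<beta> la \<sigma> \<rho> \<le> 1 / la"
proof -
  have "\<beta> * \<rho> \<le> \<beta>" "\<beta> * \<rho> \<le> \<rho>" "0 < la * \<sigma>"
    using \<beta> \<rho> la \<sigma> mult_left_mono[of \<rho> 1 \<beta>] mult_right_mono[of \<beta> 1 \<rho>] by simp_all
  then have pos: "0 < (1 - \<rho>) * (1 - \<beta> * \<rho> + la * \<sigma>)"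
    and nonpos: "\<rho> * (\<beta> * \<rho> - 1 - \<beta> - la * \<sigma>) \<le> 0"
    using \<rho> by (auto intro: mult_pos_pos mult_nonneg_nonpos)
  have "euler_slope \<beta> la \<sigma> \<rho> + \<sigma> = (1 - \<rho>) * (1 - \<beta> * \<rho> + la * \<sigma>) / la"
    using la by (simp add: euler_slope_def field_simps)
  then have "0 < euler_slope \<beta> la \<sigma> \<rho> + \<sigma>"
    using pos la by simp
  then show "- \<sigma> < euler_slope \<beta> la \<sigma> \<rho>"
    by linarith
  have "euler_slope \<beta> la \<sigma> \<rho> - 1 / la = \<rho> * (\<beta> * \<rho> - 1 - \<beta> - la * \<sigma>) / la"
    using la by (simp add: euler_slope_def field_simps)
  then show "euler_slope \<beta> la \<sigma> \<rho> \<le> 1 / la"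
    using nonpos la divide_nonpos_pos[of _ la] by fastforce
qed

lemma euler_slope_antipersistent:
  assumes "0 \<le> \<beta>" "la > 0" "\<sigma> > 0" "\<rho> < 0"
  shows "1 / la < euler_slope \<beta> la \<sigma> \<rho>"
proof -
  have "\<beta> * \<rho> \<le> 0" "0 < la * \<sigma>"
    using assms by (simp_all add: mult_nonneg_nonpos)
  then have "0 < \<rho> * (\<beta> * \<rho> - 1 - \<beta> - la * \<sigma>)"
    using assms by (intro mult_neg_neg) linarith+
  moreover have "euler_slope \<beta> la \<sigma> \<rho> - 1 / la = \<rho> * (\<beta> * \<rho> - 1 - \<beta> - la * \<sigma>) / la"
    using assms by (simp add: euler_slope_def field_simps)
  ultimately show ?thesis
    using assms by (simp add: field_simps)
qed

section \<open>Reduction of the infinite-horizon model\<close>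

lemma sums_geometric_shifted_head:
  fixes r c d e :: real
  assumes "\<bar>r\<bar> < 1"
  shows "(\<lambda>n. r ^ n * (c + (if n = 0 then e else d))) sums ((c + d) / (1 - r) + (e - d))"
proof -
  have "(\<lambda>n. r ^ n * (c + d) + (if n = 0 then e - d else 0)) sums ((c + d) / (1 - r) + (e - d))"
    using sums_add[OF sums_mult2[OF geometric_sums[of r]] sums_single[of 0 "\<lambda>_. e - d"]] assms
    by simp
  moreover have "(\<lambda>n. r ^ n * (c + d) + (if n = 0 then e - d else 0))
      = (\<lambda>n. r ^ n * (c + (if n = 0 then e else d)))"
    by (auto simp: algebra_simps)
  ultimately show ?thesis
    by simp
qed

lemma ih_eqs_iff:
  assumes "0 < \<beta>" "\<beta> < 1" "0 < \<xi>" "\<xi> < 1"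
  shows "ih_eqs \<beta> \<xi> \<sigma> \<mu> \<psi> Fx F\<pi> Fi Feps eps x \<pi> i \<longleftrightarrow>
     x = - \<sigma> * i + (((1 - \<beta>) * Fx + \<sigma> * F\<pi> - \<sigma> * \<beta> * Fi + Feps) / (1 - \<beta>) + (eps - Feps)) \<and>
     \<pi> = lam \<beta> \<xi> * x + (\<xi> * \<beta> * lam \<beta> \<xi> * Fx + (1 - \<xi>) * \<beta> * F\<pi>) / (1 - \<xi> * \<beta>) \<and>
     i = max (\<psi> * \<pi>) (- \<mu>)"
proof -
  have "\<bar>\<beta>\<bar> < 1" "norm (\<xi> * \<beta>) < 1"
    using assms mult_strict_mono[of \<xi> 1 \<beta> 1] by simp_all
  have "(\<Sum>n. \<beta> ^ n * (c + (if n = 0 then eps else Feps))) = (c + Feps) / (1 - \<beta>) + (eps - Feps)"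
    for c
    using sums_geometric_shifted_head[OF \<open>\<bar>\<beta>\<bar> < 1\<close>] by (rule sums_unique[symmetric])
  moreover have "(\<Sum>n. (\<xi> * \<beta>) ^ n * d) = d / (1 - \<xi> * \<beta>)" for d
    using sums_unique[OF sums_mult2[OF geometric_sums[OF \<open>norm (\<xi> * \<beta>) < 1\<close>]], symmetric]
    by simp
  ultimately show ?thesis
    unfolding ih_eqs_def by presburger
qed

lemma shifted_pair_iff:
  fixes w K z1 z2 v1 v2 :: real
  shows "(z1 = K + v1 \<and> z2 = K + v2) \<longleftrightarrow>
    z1 - v1 = z2 - v2 \<and> K = w * (z2 - v2) + (1 - w) * (z1 - v1)"
proof
  assume "z1 = K + v1 \<and> z2 = K + v2"
  then show "z1 - v1 = z2 - v2 \<and> K = w * (z2 - v2) + (1 - w) * (z1 - v1)"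
    by (simp add: algebra_simps)
next
  assume h: "z1 - v1 = z2 - v2 \<and> K = w * (z2 - v2) + (1 - w) * (z1 - v1)"
  then have "K = w * (z1 - v1) + (1 - w) * (z1 - v1)"
    by simp
  then have "K = z1 - v1"
    by (simp add: algebra_simps)
  then show "z1 = K + v1 \<and> z2 = K + v2"
    using h by simp
qed

(* Under RPE forecasts, in each of its two equations the infinite-horizon system differs from the
   Euler system only by a constant shared by both states; each constant is pinned down by the
   averaged equation, and the two averaged systems are equivalent. *)
lemma ih_eqs_pair_iff_euler_solves:
  assumes \<beta>\<xi>: "0 < \<beta>" "\<beta> < 1" "0 < \<xi>" "\<xi> < 1"
    and X: "X = w * x2 + (1 - w) * x1" and P: "P = w * \<pi>2 + (1 - w) * \<pi>1"
    and I: "I = w * i2 + (1 - w) * i1" and E: "E = w * e2 + (1 - w) * e1"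
    and i: "i1 = max (\<psi> * \<pi>1) (- \<mu>)" "i2 = max (\<psi> * \<pi>2) (- \<mu>)"
  shows "ih_eqs \<beta> \<xi> \<sigma> \<mu> \<psi> X P I E e1 x1 \<pi>1 i1 \<and> ih_eqs \<beta> \<xi> \<sigma> \<mu> \<psi> X P I E e2 x2 \<pi>2 i2
    \<longleftrightarrow> euler_solves \<beta> (lam \<beta> \<xi>) \<sigma> \<mu> \<psi> e1 e2 x1 \<pi>1 x2 \<pi>2 X P X P"
proof -
  define la where "la = lam \<beta> \<xi>"
  have nz: "1 - \<beta> \<noteq> 0" "1 - \<xi> * \<beta> \<noteq> 0"
    using \<beta>\<xi> mult_strict_mono[of \<xi> 1 \<beta> 1] by auto
  define K1 K2 where "K1 = ((1 - \<beta>) * X + \<sigma> * P - \<sigma> * \<beta> * I + E) / (1 - \<beta>) - E"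
    and "K2 = (\<xi> * \<beta> * la * X + (1 - \<xi>) * \<beta> * P) / (1 - \<xi> * \<beta>)"
  define v1 v2 u1 u2 where "v1 = e1 - \<sigma> * i1" and "v2 = e2 - \<sigma> * i2"
    and "u1 = la * x1" and "u2 = la * x2"
  have c1: "w * (x2 - v2) + (1 - w) * (x1 - v1) = X - E + \<sigma> * I"
    and c2: "w * (\<pi>2 - u2) + (1 - w) * (\<pi>1 - u1) = P - la * X"
    unfolding v1_def v2_def u1_def u2_def X P I E by (simp_all add: algebra_simps)
  have K1: "K1 = X - E + \<sigma> * I \<longleftrightarrow> X + \<sigma> * P = X - E + \<sigma> * I"
    using nz unfolding K1_def by (simp add: field_simps)
  have K2: "K2 = P - la * X \<longleftrightarrow> \<beta> * P = P - la * X"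
    using nz unfolding K2_def by (simp add: field_simps)
  have "- \<sigma> * i + (((1 - \<beta>) * X + \<sigma> * P - \<sigma> * \<beta> * I + E) / (1 - \<beta>) + (e - E))
      = K1 + (e - \<sigma> * i)" for e i
    by (simp add: K1_def)
  moreover have "lam \<beta> \<xi> * x + (\<xi> * \<beta> * lam \<beta> \<xi> * X + (1 - \<xi>) * \<beta> * P) / (1 - \<xi> * \<beta>)
      = K2 + la * x" for x
    by (simp add: K2_def la_def)
  ultimately have
    "ih_eqs \<beta> \<xi> \<sigma> \<mu> \<psi> X P I E e1 x1 \<pi>1 i1 \<and> ih_eqs \<beta> \<xi> \<sigma> \<mu> \<psi> X P I E e2 x2 \<pi>2 i2
      \<longleftrightarrow> (x1 = K1 + v1 \<and> x2 = K1 + v2) \<and> (\<pi>1 = K2 + u1 \<and> \<pi>2 = K2 + u2)"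
    unfolding ih_eqs_iff[OF \<beta>\<xi>] v1_def v2_def u1_def u2_def using i by auto
  also have "\<dots> \<longleftrightarrow> (x1 = (X + \<sigma> * P) + v1 \<and> x2 = (X + \<sigma> * P) + v2)
      \<and> (\<pi>1 = \<beta> * P + u1 \<and> \<pi>2 = \<beta> * P + u2)"
    unfolding shifted_pair_iff[where w = w] c1 c2 K1 K2 ..
  also have "\<dots> \<longleftrightarrow> euler_solves \<beta> la \<sigma> \<mu> \<psi> e1 e2 x1 \<pi>1 x2 \<pi>2 X P X P"
  proof -
    have "X - \<sigma> * (i - P) + e = (X + \<sigma> * P) + (e - \<sigma> * i)" "la * x + \<beta> * P = \<beta> * P + la * x"
      for i e x
      by (simp_all add: algebra_simps)
    then show ?thesis
      unfolding euler_solves_def v1_def v2_def u1_def u2_def i[symmetric] by auto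
  qed
  finally show ?thesis
    by (simp only: la_def)
qed

lemma ih_RPE_iff_euler_RPE:
  assumes \<beta>\<xi>: "0 < \<beta>" "\<beta> < 1" "0 < \<xi>" "\<xi> < 1"
  shows "ih_RPE_exists \<beta> \<xi> \<sigma> \<mu> \<psi> p q e1 e2 \<longleftrightarrow> euler_RPE_exists \<beta> (lam \<beta> \<xi>) \<sigma> \<mu> \<psi> p q e1 e2"
proof -
  define w where "w = qbar p q"
  have avg: "Eavg p q z1 z2 = w * z2 + (1 - w) * z1" for z1 z2
    by (simp add: Eavg_def w_def)
  note pointwise = ih_eqs_pair_iff_euler_solves[OF \<beta>\<xi>]
  show ?thesis
  proof
    assume "ih_RPE_exists \<beta> \<xi> \<sigma> \<mu> \<psi> p q e1 e2"
    then obtain x1 \<pi>1 i1 x2 \<pi>2 i2 where h: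
      "ih_eqs \<beta> \<xi> \<sigma> \<mu> \<psi> (w * x2 + (1 - w) * x1) (w * \<pi>2 + (1 - w) * \<pi>1) (w * i2 + (1 - w) * i1)
         (w * e2 + (1 - w) * e1) e1 x1 \<pi>1 i1"
      "ih_eqs \<beta> \<xi> \<sigma> \<mu> \<psi> (w * x2 + (1 - w) * x1) (w * \<pi>2 + (1 - w) * \<pi>1) (w * i2 + (1 - w) * i1)
         (w * e2 + (1 - w) * e1) e2 x2 \<pi>2 i2"
      unfolding ih_RPE_exists_def avg by blast
    moreover have "i1 = max (\<psi> * \<pi>1) (- \<mu>)" "i2 = max (\<psi> * \<pi>2) (- \<mu>)"
      using h by (simp_all add: ih_eqs_def)
    ultimately show "euler_RPE_exists \<beta> (lam \<beta> \<xi>) \<sigma> \<mu> \<psi> p q e1 e2"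
      using pointwise[OF refl refl refl refl] unfolding euler_RPE_exists_def avg by blast
  next
    assume "euler_RPE_exists \<beta> (lam \<beta> \<xi>) \<sigma> \<mu> \<psi> p q e1 e2"
    then obtain x1 \<pi>1 x2 \<pi>2 where "euler_solves \<beta> (lam \<beta> \<xi>) \<sigma> \<mu> \<psi> e1 e2 x1 \<pi>1 x2 \<pi>2
        (w * x2 + (1 - w) * x1) (w * \<pi>2 + (1 - w) * \<pi>1)
        (w * x2 + (1 - w) * x1) (w * \<pi>2 + (1 - w) * \<pi>1)"
      unfolding euler_RPE_exists_def avg by blast
    then show "ih_RPE_exists \<beta> \<xi> \<sigma> \<mu> \<psi> p q e1 e2"
      using pointwise[OF refl refl refl refl refl refl] unfolding ih_RPE_exists_def avg by blast
  qed
qed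

section \<open>Existence thresholds\<close>

lemma lam_pos:
  assumes "0 < \<beta>" "\<beta> < 1" "0 < \<xi>" "\<xi> < 1"
  shows "lam \<beta> \<xi> > 0"
  using assms mult_strict_mono[of \<xi> 1 \<beta> 1] by (simp add: lam_def)

lemma ereal_le_if_lower_bound:
  fixes E :: ereal
  assumes "\<And>x. E \<le> ereal x \<Longrightarrow> \<theta> \<le> x"
  shows "ereal \<theta> \<le> E"
proof (cases E)
  case MInf
  then show ?thesis
    using assms[of "\<theta> - 1"] by simp
qed (use assms in auto)

context
  fixes \<beta> \<xi> \<sigma> \<mu> \<psi> p q e2 :: real
  assumes \<beta>: "0 < \<beta>" "\<beta> < 1" and \<xi>: "0 < \<xi>" "\<xi> < 1"
    and \<sigma>: "\<sigma> > 0" and \<mu>: "\<mu> > 0" and \<psi>: "\<psi> > 1"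
    and p: "0 < p" "p \<le> 1" and q: "0 < q" "q \<le> 1" and pq: "(p, q) \<noteq> (1, 1)"
    and e2: "e2 \<ge> 0"
begin

lemma RPE_exists_iff_threshold_le:
  assumes "q < 1"
  shows "ih_RPE_exists \<beta> \<xi> \<sigma> \<mu> \<psi> p q e1 e2
      \<longleftrightarrow> rpe_threshold \<sigma> \<mu> \<psi> (qbar p q) (1 / lam \<beta> \<xi>) e2 \<le> e1"
    and "euler_RPE_exists \<beta> (lam \<beta> \<xi>) \<sigma> \<mu> \<psi> p q e1 e2
      \<longleftrightarrow> rpe_threshold \<sigma> \<mu> \<psi> (qbar p q) (1 / lam \<beta> \<xi>) e2 \<le> e1"
proof -
  have "0 \<le> qbar p q" "qbar p q < 1"
    using p assms by (simp_all add: qbar_def divide_less_eq)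
  moreover have "lam \<beta> \<xi> > 0"
    using lam_pos \<beta> \<xi> by blast
  ultimately show "euler_RPE_exists \<beta> (lam \<beta> \<xi>) \<sigma> \<mu> \<psi> p q e1 e2
      \<longleftrightarrow> rpe_threshold \<sigma> \<mu> \<psi> (qbar p q) (1 / lam \<beta> \<xi>) e2 \<le> e1"
    using euler_RPE_iff_reduced reduced_system_solvable_iff \<sigma> \<mu> \<psi> e2 by simp
  then show "ih_RPE_exists \<beta> \<xi> \<sigma> \<mu> \<psi> p q e1 e2
      \<longleftrightarrow> rpe_threshold \<sigma> \<mu> \<psi> (qbar p q) (1 / lam \<beta> \<xi>) e2 \<le> e1"
    using ih_RPE_iff_euler_RPE \<beta> \<xi> by simp
qed

lemma RPE_exists_if_absorbing:
  assumes "q = 1"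
  shows "ih_RPE_exists \<beta> \<xi> \<sigma> \<mu> \<psi> p q e1 e2"
    and "euler_RPE_exists \<beta> (lam \<beta> \<xi>) \<sigma> \<mu> \<psi> p q e1 e2"
proof -
  have "p < 1"
    using p pq assms by auto
  then have w: "qbar p q = 1"
    using assms by (simp add: qbar_def)
  have la: "lam \<beta> \<xi> > 0"
    using lam_pos \<beta> \<xi> by blast
  have "gap_slope \<sigma> \<psi> 1 (1 / lam \<beta> \<xi>) = 0"
    using la \<sigma> \<psi> by (simp add: gap_slope_def add_pos_pos)
  then have "(e2 - e1) * (gap_slope \<sigma> \<psi> 1 (1 / lam \<beta> \<xi>) + 1 - 1) \<le> e2 - real_rate_min \<sigma> \<mu> \<psi>"
    using real_rate_min_nonpos[of \<sigma> \<mu> \<psi>] \<sigma> \<mu> \<psi> e2 by simp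
  then show "euler_RPE_exists \<beta> (lam \<beta> \<xi>) \<sigma> \<mu> \<psi> p q e1 e2"
    using reduced_system_sufficient euler_RPE_iff_reduced la w \<sigma> \<mu> \<psi> e2 by simp
  then show "ih_RPE_exists \<beta> \<xi> \<sigma> \<mu> \<psi> p q e1 e2"
    using ih_RPE_iff_euler_RPE \<beta> \<xi> by simp
qed

lemma REE_threshold_ge_RPE_threshold_iff:
  assumes "q < 1"
    and REE: "\<forall>e1. euler_REE_exists \<beta> (lam \<beta> \<xi>) \<sigma> \<mu> \<psi> p q e1 e2 \<longleftrightarrow> eREE \<le> ereal e1"
  shows "ereal (rpe_threshold \<sigma> \<mu> \<psi> (qbar p q) (1 / lam \<beta> \<xi>) e2) \<le> eREE \<longleftrightarrow> 1 \<le> p + q"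
proof -
  define w la \<kappa> where "w = qbar p q" and "la = lam \<beta> \<xi>"
    and "\<kappa> = euler_slope \<beta> la \<sigma> (p + q - 1)"
  have w: "0 \<le> w" "w < 1"
    using p assms by (simp_all add: w_def qbar_def divide_less_eq)
  have la: "la > 0"
    using lam_pos \<beta> \<xi> by (simp add: la_def)
  have REE_iff: "euler_REE_exists \<beta> la \<sigma> \<mu> \<psi> p q e1 e2
      \<longleftrightarrow> (\<exists>\<pi>1 \<pi>2. reduced_system \<sigma> \<mu> \<psi> w \<kappa> e1 e2 \<pi>1 \<pi>2)" for e1
    using euler_REE_iff_reduced la \<open>q < 1\<close> p by (simp add: w_def \<kappa>_def)
  show ?thesis
  proof (cases "1 \<le> p + q")
    case True
    have "- \<sigma> < \<kappa>" "\<kappa> \<le> 1 / la"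
      using euler_slope_persistent[of \<beta> la \<sigma> "p + q - 1"] \<beta> la \<sigma> True \<open>q < 1\<close> p
      by (simp_all add: \<kappa>_def)
    then have "rpe_threshold \<sigma> \<mu> \<psi> w (1 / la) e2 \<le> e1" if "eREE \<le> ereal e1" for e1
      using REE REE_iff that reduced_system_necessary[of \<sigma> \<psi> w \<kappa> "1 / la"]
        solvability_condition_iff_threshold[of \<sigma> \<psi> w "1 / la"] \<sigma> \<psi> w la
      by (auto simp: la_def)
    then show ?thesis
      using True ereal_le_if_lower_bound unfolding w_def la_def by blast
  next
    case False
    have "1 / la < \<kappa>"
      using euler_slope_antipersistent[of \<beta> la \<sigma> "p + q - 1"] \<beta> la \<sigma> False by (simp add: \<kappa>_def)
    moreover have "0 < w"
      using False q by (simp add: w_def qbar_def)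
    ultimately have "rpe_threshold \<sigma> \<mu> \<psi> w \<kappa> e2 < rpe_threshold \<sigma> \<mu> \<psi> w (1 / la) e2"
      using rpe_threshold_strict_antimono \<sigma> \<mu> \<psi> w la e2 by simp
    moreover have "euler_REE_exists \<beta> la \<sigma> \<mu> \<psi> p q (rpe_threshold \<sigma> \<mu> \<psi> w \<kappa> e2) e2"
      using REE_iff reduced_system_solvable_iff \<sigma> \<mu> \<psi> w e2 \<open>1 / la < \<kappa>\<close> la
      by (simp add: order_less_trans[of 0 "1 / la"])
    ultimately show ?thesis
      using REE False unfolding w_def la_def by (metis ereal_less_eq(3) leD order_trans)
  qed
qed

end

theorem proposition9:
  fixes \<beta> \<xi> \<sigma> \<mu> \<psi> p q e2 :: real
  assumes "0 < \<beta>" "\<beta> < 1" "0 < \<xi>" "\<xi> < 1"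
    and "\<sigma> > 0" "\<mu> > 0" "\<psi> > 1"
    and "0 < p" "p \<le> 1" "0 < q" "q \<le> 1" "(p, q) \<noteq> (1, 1)"
    and "e2 \<ge> 0"
  shows "\<exists>eRPE :: ereal. eRPE < \<infinity> \<and>
           (\<forall>e1 :: real.
              (ih_RPE_exists \<beta> \<xi> \<sigma> \<mu> \<psi> p q e1 e2 \<longleftrightarrow> ereal e1 \<ge> eRPE) \<and>
              (euler_RPE_exists \<beta> (lam \<beta> \<xi>) \<sigma> \<mu> \<psi> p q e1 e2 \<longleftrightarrow> ereal e1 \<ge> eRPE)) \<and>
           (q = 1 \<longrightarrow> eRPE = - \<infinity>) \<and>
           (\<forall>eREE :: ereal. eREE < \<infinity> \<longrightarrow>
              (\<forall>e1 :: real. euler_REE_exists \<beta> (lam \<beta> \<xi>) \<sigma> \<mu> \<psi> p q e1 e2 \<longleftrightarrow> ereal e1 \<ge> eREE) \<longrightarrow>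
              (eREE \<ge> eRPE \<longleftrightarrow> p + q \<ge> 1))"
proof (cases "q = 1")
  case True
  then have "1 \<le> p + q"
    using assms(8) by simp
  then show ?thesis
    using RPE_exists_if_absorbing[OF assms True] by (intro exI[of _ "- \<infinity>"]) simp
next
  case False
  then have "q < 1"
    using assms(11) by simp
  show ?thesis
    using RPE_exists_iff_threshold_le[OF assms \<open>q < 1\<close>]
      REE_threshold_ge_RPE_threshold_iff[OF assms \<open>q < 1\<close>] False
    by (intro exI[of _ "ereal (rpe_threshold \<sigma> \<mu> \<psi> (qbar p q) (1 / lam \<beta> \<xi>) e2)"]) auto
qed

end
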